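(* Let $\mathbf P\subset\mathbb Z^n$ be finite with $P=\operatorname{Conv}\mathbf P$, and let $D$ be a daughter polytope of $\mathbf P$ with associated set $\mathcal D=\mathcal D(D)$. Let $W\in\mathcal D$ and let $S$ be a face of $P$ with $S\subset W$. Then for every $W'\in\mathcal D\setminus\{W\}$, the projection $\pi_S(W')$ does not intersect $\mathbf P_S$.
   Context: **Quotient projection.** $\pi_S:\mathbb R^n\to\mathbb R^n/\operatorname{aff}(S)$ sends $\operatorname{aff}(S)$ to the origin. **Daughter polytope.** For a nonempty polytope $D$ with vertices in $\mathbf P$, $\mathcal D(D)$ is the set of inclusion-maximal faces $F$ of $P$ with $D\cap F=\emptyset$. $D$ is a daughter polytope of $\mathbf P$ if: 1. distinct faces in $\mathcal D(D)$ are pairwise disjoint; 2. $D=\operatorname{Conv}(\mathbf P\setminus\bigcup_{F\in\mathcal D(D)}F)$. **The set $\mathbf P_S$.** For a face $S$ of $P$: $$\mathbf P_S=\pi_S(\mathbf P)\cap\overline{\pi_S(P)\setminus\pi_S(\operatorname{Conv}(\mathbf P\setminus S))},$$ where the overline denotes topological closure. *)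

theory Defs
  imports "HOL-Analysis.Analysis"
begin

text \<open>Quotient projection by aff(S), realised concretely as the orthogonal projection
  onto the orthogonal complement of the direction space of aff(S), after translating
  a point of S to the origin (this is a linear isomorphism of the quotient space
  R^n / aff(S) onto a closed subspace of R^n, so images, intersections and
  closures are faithfully represented). For S = {} the map is the identity.\<close>
definition quot_proj :: "(real^'n) set \<Rightarrow> real^'n \<Rightarrow> real^'n" where
  "quot_proj S x =
     closest_point (orthogonal_comp (span {a - b | a b. a \<in> S \<and> b \<in> S}))
       (x - (if S = {} then 0 else (SOME s. s \<in> S)))"

definition daughter_faces :: "(real^'n) set \<Rightarrow> (real^'n) set \<Rightarrow> (real^'n) set set" where
  "daughter_faces PP D =
     {F. F face_of convex hull PP \<and> D \<inter> F = {} \<and>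
         (\<forall>G. G face_of convex hull PP \<and> D \<inter> G = {} \<and> F \<subseteq> G \<longrightarrow> G = F)}"

definition is_daughter :: "(real^'n) set \<Rightarrow> (real^'n) set \<Rightarrow> bool" where
  "is_daughter PP D \<longleftrightarrow>
     polytope D \<and> D \<noteq> {} \<and> {v. v extreme_point_of D} \<subseteq> PP \<and>
     pairwise disjnt (daughter_faces PP D) \<and>
     D = convex hull (PP - \<Union>(daughter_faces PP D))"

definition PP_face :: "(real^'n) set \<Rightarrow> (real^'n) set \<Rightarrow> (real^'n) set" where
  "PP_face PP S =
     quot_proj S ` PP \<inter>
     closure (quot_proj S ` (convex hull PP) - quot_proj S ` (convex hull (PP - S)))"

end

theory Submission
  imports Defs
begin

(* Suppose some w in W' has pi_S(w) in PP_S. As W' misses S, w lies in conv(PP - S), so pi_S(w)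
   lies in the polytope K = pi_S(conv(PP - S)) and in the closure of conv(insert 0 K) - K. Hence
   a facet hyperplane of K through pi_S(w) separates K from the origin; pulled back along pi_S it
   is an affine function vanishing on S, at least 1 on the other points of PP and equal to 1 at w.
   Tilting the hyperplane that exposes W' by this function yields a supporting hyperplane of
   conv PP touching S (inside W) and W', but no point of PP outside W and W'. The face it cuts out
   misses D, so it lies in one maximal face disjoint from D, which then meets both W and W',
   against the pairwise disjointness of the daughter faces. *)

lemma closest_point_subspace_in:
  fixes V :: "'a::euclidean_space set"
  assumes "subspace V"
  shows "closest_point V a \<in> V"
  using closest_point_in_set[of V a] assms closed_subspace subspace_0 by blast

lemma closest_point_subspace_orthogonal:
  fixes V :: "'a::euclidean_space set"
  assumes V: "subspace V" and v: "v \<in> V"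
  shows "(a - closest_point V a) \<bullet> v = 0"
proof -
  let ?p = "closest_point V a"
  have cc: "convex V" "closed V"
    using V by (auto simp: closed_subspace subspace_imp_convex)
  have "?p + v \<in> V" "?p - v \<in> V"
    using V v closest_point_subspace_in[OF V] by (auto simp: subspace_add subspace_diff)
  then have "(a - ?p) \<bullet> ((?p + v) - ?p) \<le> 0" "(a - ?p) \<bullet> ((?p - v) - ?p) \<le> 0"
    using closest_point_dot[OF cc] by blast+
  then show ?thesis
    by (simp add: inner_diff_right)
qed

lemma closest_point_subspace_eqI:
  fixes V :: "'a::euclidean_space set"
  assumes V: "subspace V" and p: "p \<in> V" and orth: "\<forall>v\<in>V. (a - p) \<bullet> v = 0"
  shows "closest_point V a = p"
proof -
  let ?q = "closest_point V a"
  have "p - ?q \<in> V"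
    using V p closest_point_subspace_in[OF V] by (simp add: subspace_diff)
  then have "(a - ?q) \<bullet> (p - ?q) = 0" "(a - p) \<bullet> (p - ?q) = 0"
    using closest_point_subspace_orthogonal[OF V] orth by blast+
  then have "(p - ?q) \<bullet> (p - ?q) = 0"
    by (simp add: inner_diff_left)
  then show ?thesis
    by simp
qed

lemma linear_closest_point_subspace:
  fixes V :: "'a::euclidean_space set"
  assumes V: "subspace V"
  shows "linear (closest_point V)"
proof (rule linearI)
  note in_V = closest_point_subspace_in[OF V]
  note orth = closest_point_subspace_orthogonal[OF V]
  fix x y
  have "(x + y - (closest_point V x + closest_point V y)) \<bullet> v = 0" if "v \<in> V" for v
    using orth[OF that, of x] orth[OF that, of y] by (simp add: inner_diff_left inner_add_left)
  moreover have "closest_point V x + closest_point V y \<in> V"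
    by (intro subspace_add V in_V)
  ultimately show "closest_point V (x + y) = closest_point V x + closest_point V y"
    using V closest_point_subspace_eqI by blast
next
  note in_V = closest_point_subspace_in[OF V]
  note orth = closest_point_subspace_orthogonal[OF V]
  fix c :: real and x
  have "(c *\<^sub>R x - c *\<^sub>R closest_point V x) \<bullet> v = 0" if "v \<in> V" for v
    using orth[OF that, of x] by (simp flip: scaleR_right_diff_distrib)
  moreover have "c *\<^sub>R closest_point V x \<in> V"
    by (intro subspace_scale V in_V)
  ultimately show "closest_point V (c *\<^sub>R x) = c *\<^sub>R closest_point V x"
    using V closest_point_subspace_eqI by blast
qed

lemma closest_point_subspace_inner_commute:
  fixes V :: "'a::euclidean_space set"
  assumes V: "subspace V"
  shows "a \<bullet> closest_point V x = closest_point V a \<bullet> x"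
proof -
  note orth = closest_point_subspace_orthogonal[OF V _] and in_V = closest_point_subspace_in[OF V]
  have "a \<bullet> closest_point V x = closest_point V a \<bullet> closest_point V x"
    using orth[OF in_V, of a x] by (simp add: inner_diff_left)
  also have "\<dots> = closest_point V a \<bullet> x"
    using orth[OF in_V, of x a] by (metis inner_commute inner_diff_left eq_iff_diff_eq_0)
  finally show ?thesis .
qed

lemma quot_proj_affine:
  obtains f :: "real^'n \<Rightarrow> real^'n" and c
  where "linear f" "\<And>a x. a \<bullet> f x = f a \<bullet> x" "quot_proj S = (\<lambda>x. f x - c)"
proof -
  define V :: "(real^'n) set" where "V = orthogonal_comp (span {a - b | a b. a \<in> S \<and> b \<in> S})"
  have V: "subspace V"
    unfolding V_def by (rule subspace_orthogonal_comp)
  show thesis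
  proof (rule that)
    show "linear (closest_point V)"
      using V by (rule linear_closest_point_subspace)
    then show "quot_proj S =
        (\<lambda>x. closest_point V x - closest_point V (if S = {} then 0 else SOME s. s \<in> S))"
      unfolding quot_proj_def V_def[symmetric] by (simp add: linear_diff)
  qed (use V closest_point_subspace_inner_commute in blast)
qed

lemma quot_proj_vanishes:
  assumes "s \<in> S"
  shows "quot_proj S s = 0"
proof -
  define V where "V = orthogonal_comp (span {a - b | a b. a \<in> S \<and> b \<in> S})"
  define s0 where "s0 = (SOME s. s \<in> S)"
  have V: "subspace V"
    unfolding V_def by (rule subspace_orthogonal_comp)
  have "s0 \<in> S"
    unfolding s0_def using assms by (rule someI)
  then have "s - s0 \<in> span {a - b | a b. a \<in> S \<and> b \<in> S}"
    using assms by (intro span_base) blast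
  then have "\<forall>v\<in>V. (s - s0 - 0) \<bullet> v = 0"
    unfolding V_def orthogonal_comp_def orthogonal_def by simp
  then have "closest_point V (s - s0) = 0"
    by (rule closest_point_subspace_eqI[OF V subspace_0[OF V]])
  then show ?thesis
    unfolding quot_proj_def V_def[symmetric] s0_def[symmetric] using assms by auto
qed

lemma quot_proj_convex_hull: "quot_proj S ` (convex hull A) = convex hull (quot_proj S ` A)"
proof -
  obtain f c where f: "linear f" and qp: "quot_proj S = (\<lambda>x. f x - c)"
    using quot_proj_affine by blast
  have img: "quot_proj S ` B = (+) (- c) ` (f ` B)" for B
    unfolding qp image_image by simp
  show ?thesis
    unfolding img convex_hull_translation convex_hull_linear_image[OF f] ..
qed

lemma inner_quot_proj:
  obtains r r0 where "\<And>x. a \<bullet> quot_proj S x = r \<bullet> x - r0"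
proof -
  obtain f c where "\<And>a x. a \<bullet> f x = f a \<bullet> x" "quot_proj S = (\<lambda>x. f x - c)"
    using quot_proj_affine by blast
  then show thesis
    using that[of "f a" "a \<bullet> c"] by (simp add: inner_diff_right)
qed

lemma polyhedron_hyperplane_separating_origin:
  fixes K :: "'a::euclidean_space set"
  assumes "polyhedron K" and zK: "z \<in> K" and zcl: "z \<in> closure (convex hull (insert 0 K) - K)"
  obtains a where "\<forall>x\<in>K. 1 \<le> a \<bullet> x" "a \<bullet> z = 1"
proof -
  obtain F where F: "finite F" "K = \<Inter>F" "\<forall>h\<in>F. \<exists>a b. a \<noteq> 0 \<and> h = {x. a \<bullet> x \<le> b}"
    using assms(1) unfolding polyhedron_def by blast
  \<comment> \<open>Otherwise every facet through \<open>z\<close> has \<open>0\<close> on its side, and near \<open>z\<close> the hull of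
    \<open>insert 0 K\<close> is cut out by the same inequalities as \<open>K\<close>.\<close>
  have "\<exists>h\<in>F. z \<notin> interior h \<and> 0 \<notin> h"
  proof (rule ccontr)
    assume H: "\<not> ?thesis"
    define U where "U = \<Inter>(interior ` {h\<in>F. z \<in> interior h})"
    have "open U" "z \<in> U"
      unfolding U_def using F(1) by auto
    have "u \<in> h" if u: "u \<in> U" "u \<in> convex hull (insert 0 K)" and h: "h \<in> F" for u h
    proof (cases "z \<in> interior h")
      case True
      then show ?thesis
        using u h interior_subset unfolding U_def by blast
    next
      case False
      then have "0 \<in> h"
        using H h by blast
      moreover have "K \<subseteq> h" "convex h"
        using F h by (auto simp: convex_halfspace_le)
      ultimately have "convex hull (insert 0 K) \<subseteq> h"
        by (simp add: hull_minimal)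
      then show ?thesis
        using u by blast
    qed
    then have "U \<inter> (convex hull (insert 0 K) - K) = {}"
      using F(2) by blast
    then show False
      using open_Int_closure_eq_empty[OF \<open>open U\<close>] \<open>z \<in> U\<close> zcl by blast
  qed
  then obtain h where h: "h \<in> F" "z \<notin> interior h" "0 \<notin> h"
    by blast
  then obtain a b where ab: "a \<noteq> 0" "h = {x. a \<bullet> x \<le> b}"
    using F(3) by blast
  have "K \<subseteq> h"
    using F(2) h(1) by blast
  then have "\<forall>x\<in>K. a \<bullet> x \<le> b" "a \<bullet> z = b" "b < 0"
    using ab h zK by auto
  then show thesis
    by (intro that[of "(1 / b) *\<^sub>R a"]) (auto simp: divide_le_eq)
qed

lemma face_subset_convex_hull_diff:
  fixes PP :: "'a::euclidean_space set"
  assumes "finite PP" "F face_of convex hull PP" "F \<inter> S = {}"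
  shows "F \<subseteq> convex hull (PP - S)"
proof -
  obtain B where B: "B \<subseteq> PP" "F = convex hull B"
    by (rule face_of_convex_hull_subset[OF finite_imp_compact[OF assms(1)] assms(2)])
  have "B \<subseteq> F"
    unfolding B(2) by (rule hull_subset)
  then have "B \<subseteq> PP - S"
    using B(1) assms(3) by blast
  then show ?thesis
    unfolding B(2) by (rule hull_mono)
qed

lemma PP_face_separating_functional:
  assumes "finite PP" and w: "w \<in> convex hull (PP - S)" and wS: "quot_proj S w \<in> PP_face PP S"
  obtains r r0 where "\<forall>s\<in>S. r \<bullet> s = r0" "\<forall>q\<in>PP - S. r0 + 1 \<le> r \<bullet> q" "r \<bullet> w = r0 + 1"
proof -
  let ?\<pi> = "quot_proj S"
  define K where "K = ?\<pi> ` (convex hull (PP - S))"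
  have "polyhedron K"
    unfolding K_def quot_proj_convex_hull using assms(1) by (simp add: polyhedron_convex_hull)
  have "?\<pi> q \<in> insert 0 K" if "q \<in> PP" for q
  proof (cases "q \<in> S")
    case True
    then show ?thesis
      by (simp add: quot_proj_vanishes)
  next
    case False
    then have "q \<in> convex hull (PP - S)"
      using that by (simp add: hull_inc)
    then show ?thesis
      unfolding K_def by blast
  qed
  then have "?\<pi> ` PP \<subseteq> insert 0 K"
    by blast
  then have "?\<pi> ` (convex hull PP) \<subseteq> convex hull (insert 0 K)"
    unfolding quot_proj_convex_hull by (rule hull_mono)
  then have "closure (?\<pi> ` (convex hull PP) - K) \<subseteq> closure (convex hull (insert 0 K) - K)"
    by (intro closure_mono Diff_mono) auto
  then have "?\<pi> w \<in> closure (convex hull (insert 0 K) - K)"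
    using wS unfolding PP_face_def K_def by blast
  moreover have "?\<pi> w \<in> K"
    unfolding K_def using w by blast
  ultimately obtain a where a: "\<forall>x\<in>K. 1 \<le> a \<bullet> x" "a \<bullet> ?\<pi> w = 1"
    using polyhedron_hyperplane_separating_origin[OF \<open>polyhedron K\<close>] by blast
  obtain r r0 where r: "\<And>x. a \<bullet> ?\<pi> x = r \<bullet> x - r0"
    using inner_quot_proj by blast
  show thesis
  proof (rule that)
    show "\<forall>s\<in>S. r \<bullet> s = r0"
    proof
      fix s assume "s \<in> S"
      then show "r \<bullet> s = r0"
        using r[of s] by (simp add: quot_proj_vanishes)
    qed
    show "\<forall>q\<in>PP - S. r0 + 1 \<le> r \<bullet> q"
    proof
      fix q assume "q \<in> PP - S"
      then have "q \<in> convex hull (PP - S)"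
        by (rule hull_inc)
      then have "1 \<le> a \<bullet> ?\<pi> q"
        using a(1) unfolding K_def by blast
      then show "r0 + 1 \<le> r \<bullet> q"
        using r[of q] by linarith
    qed
    show "r \<bullet> w = r0 + 1"
      using r[of w] a(2) by linarith
  qed
qed

lemma tilt_supporting_hyperplane:
  assumes c: "\<forall>q\<in>PP. c \<bullet> q \<le> M" "\<forall>q\<in>PP - W'. c \<bullet> q < M" "c \<bullet> w = M"
    and s: "s \<in> S" "\<forall>q\<in>S. c \<bullet> q \<le> c \<bullet> s" "c \<bullet> s < M"
    and r: "\<forall>q\<in>S. r \<bullet> q = r0" "\<forall>q\<in>PP - S. r0 + 1 \<le> r \<bullet> q" "r \<bullet> w = r0 + 1"
  obtains d T where "\<forall>q\<in>PP. d \<bullet> q \<le> T" "\<forall>q\<in>PP - S - W'. d \<bullet> q < T" "d \<bullet> s = T" "d \<bullet> w = T"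
proof -
  define m where "m = c \<bullet> s"
  define d where "d = c - (M - m) *\<^sub>R r"
  define T where "T = m - (M - m) * r0"
  have dT: "d \<bullet> x - T = (c \<bullet> x - m) - (M - m) * (r \<bullet> x - r0)" for x
    unfolding d_def T_def by (simp add: algebra_simps)
  have on_S: "d \<bullet> q - T = c \<bullet> q - m" if "q \<in> S" for q
    using dT[of q] r(1) that by simp
  have off_S: "d \<bullet> q - T \<le> c \<bullet> q - M" if "q \<in> PP - S" for q
  proof -
    have "r0 + 1 \<le> r \<bullet> q"
      using r(2) that by blast
    then have "M - m \<le> (M - m) * (r \<bullet> q - r0)"
      using s(3) unfolding m_def by (simp add: mult_le_cancel_left1)
    then show ?thesis
      using dT[of q] by linarith
  qed
  have "\<forall>q\<in>PP. d \<bullet> q \<le> T"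
  proof
    fix q assume q: "q \<in> PP"
    show "d \<bullet> q \<le> T"
    proof (cases "q \<in> S")
      case True
      then have "d \<bullet> q - T = c \<bullet> q - m" "c \<bullet> q \<le> m"
        using on_S s(2) unfolding m_def by blast+
      then show ?thesis
        by linarith
    next
      case False
      then have "d \<bullet> q - T \<le> c \<bullet> q - M" "c \<bullet> q \<le> M"
        using off_S c(1) q by blast+
      then show ?thesis
        by linarith
    qed
  qed
  moreover have "\<forall>q\<in>PP - S - W'. d \<bullet> q < T"
  proof
    fix q assume "q \<in> PP - S - W'"
    then have "d \<bullet> q - T \<le> c \<bullet> q - M" "c \<bullet> q < M"
      using off_S c(2) by blast+
    then show "d \<bullet> q < T"
      by linarith
  qed
  moreover have "d \<bullet> s = T"
    using on_S[OF s(1)] unfolding m_def by simp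
  moreover have "d \<bullet> w = T"
    using dT[of w] r(3) c(3) by simp
  ultimately show thesis
    by (rule that)
qed

lemma supporting_hyperplane_through_disjoint_faces:
  fixes PP :: "'a::euclidean_space set"
  assumes "finite PP"
    and S: "S face_of convex hull PP" "S \<noteq> {}"
    and W': "W' face_of convex hull PP" "S \<inter> W' = {}" "w \<in> W'"
    and r: "\<forall>s\<in>S. r \<bullet> s = r0" "\<forall>q\<in>PP - S. r0 + 1 \<le> r \<bullet> q" "r \<bullet> w = r0 + 1"
  obtains d T s where "\<forall>x\<in>convex hull PP. d \<bullet> x \<le> T" "\<forall>q\<in>PP - S - W'. d \<bullet> q < T"
    "s \<in> S" "d \<bullet> s = T" "d \<bullet> w = T"
proof -
  let ?P = "convex hull PP"
  have "W' exposed_face_of ?P"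
    using exposed_face_of_polyhedron[OF polyhedron_convex_hull[OF assms(1)]] W'(1) by blast
  then obtain c M where cM: "?P \<subseteq> {x. c \<bullet> x \<le> M}" "W' = ?P \<inter> {x. c \<bullet> x = M}"
    unfolding exposed_face_of_def by blast
  then have below_M: "c \<bullet> x < M" if "x \<in> ?P" "x \<notin> W'" for x
    using that by fastforce
  have "compact S"
    using face_of_imp_compact[OF convex_convex_hull compact_convex_hull S(1)] assms(1)
    by (simp add: finite_imp_compact)
  moreover have "continuous_on S (\<lambda>x. c \<bullet> x)"
    by (intro continuous_intros)
  ultimately obtain s where s: "s \<in> S" "\<forall>y\<in>S. c \<bullet> y \<le> c \<bullet> s"
    using continuous_attains_sup[OF _ S(2)] by blast
  have "s \<in> ?P" "s \<notin> W'"
    using s(1) S(1) W'(2) face_of_imp_subset by blast+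
  then have sM: "c \<bullet> s < M"
    by (rule below_M)
  have c: "\<forall>q\<in>PP. c \<bullet> q \<le> M" "\<forall>q\<in>PP - W'. c \<bullet> q < M" "c \<bullet> w = M"
    using cM below_M hull_inc W'(3) by fastforce+
  obtain d T where dT: "\<forall>q\<in>PP. d \<bullet> q \<le> T" "\<forall>q\<in>PP - S - W'. d \<bullet> q < T"
    "d \<bullet> s = T" "d \<bullet> w = T"
    by (rule tilt_supporting_hyperplane[OF c s sM r])
  have "\<forall>x\<in>?P. d \<bullet> x \<le> T"
    using hull_minimal[of PP "{x. d \<bullet> x \<le> T}" convex] dT(1) by (auto simp: convex_halfspace_le)
  then show thesis
    by (rule that[OF _ dT(2) s(1) dT(3,4)])
qed

lemma face_disjoint_subset_daughter_face:
  assumes "finite PP" "G face_of convex hull PP" "D \<inter> G = {}"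
  obtains F where "F \<in> daughter_faces PP D" "G \<subseteq> F"
proof -
  define X where "X = {F. F face_of convex hull PP \<and> D \<inter> F = {} \<and> G \<subseteq> F}"
  have "finite X"
    using finite_polytope_faces[OF polytope_convex_hull[OF assms(1)]]
    unfolding X_def by (rule rev_finite_subset) blast
  moreover have "G \<in> X"
    unfolding X_def using assms(2,3) by blast
  ultimately obtain F where F: "F \<in> X" "G \<subseteq> F" "\<forall>B\<in>X. F \<subseteq> B \<longrightarrow> F = B"
    using finite_has_maximal2[of X G] by blast
  then have "F \<in> daughter_faces PP D"
    unfolding daughter_faces_def X_def by blast
  then show thesis
    using that F(2) by blast
qed

lemma daughter_faces_eq_if_meet:
  assumes "is_daughter PP D" "F \<in> daughter_faces PP D" "F' \<in> daughter_faces PP D" "x \<in> F" "x \<in> F'"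
  shows "F = F'"
  using assms unfolding is_daughter_def pairwise_def disjnt_def by blast

lemma daughter_in_open_halfspace:
  assumes "is_daughter PP D" "\<forall>q\<in>PP - \<Union>(daughter_faces PP D). d \<bullet> q < T"
  shows "D \<subseteq> {x. d \<bullet> x < T}"
proof -
  have "D = convex hull (PP - \<Union>(daughter_faces PP D))"
    using assms(1) unfolding is_daughter_def by blast
  also have "\<dots> \<subseteq> {x. d \<bullet> x < T}"
    using assms(2) by (intro hull_minimal) (auto simp: convex_halfspace_lt)
  finally show ?thesis .
qed

lemma daughter_faces_no_common_supporting_hyperplane:
  assumes "finite PP" "is_daughter PP D"
    and W: "W \<in> daughter_faces PP D" "W' \<in> daughter_faces PP D" "W \<noteq> W'"
    and dT: "\<forall>x\<in>convex hull PP. d \<bullet> x \<le> T" "\<forall>q\<in>PP - W - W'. d \<bullet> q < T"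
    and x: "x \<in> W" "d \<bullet> x = T" and w: "w \<in> W'" "d \<bullet> w = T"
  shows False
proof -
  define G where "G = convex hull PP \<inter> {x. d \<bullet> x = T}"
  have "D \<subseteq> {x. d \<bullet> x < T}"
    using dT(2) W(1,2) by (intro daughter_in_open_halfspace[OF assms(2)]) blast
  then have "D \<inter> G = {}"
    unfolding G_def by auto
  moreover have "G face_of convex hull PP"
    unfolding G_def using dT(1) by (intro face_of_Int_supporting_hyperplane_le) auto
  ultimately obtain F where F: "F \<in> daughter_faces PP D" "G \<subseteq> F"
    using face_disjoint_subset_daughter_face[OF assms(1)] by blast
  have "W \<subseteq> convex hull PP" "W' \<subseteq> convex hull PP"
    using W(1,2) face_of_imp_subset unfolding daughter_faces_def by blast+
  then have "x \<in> F" "w \<in> F"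
    using F(2) x w unfolding G_def by blast+
  then have "F = W" "F = W'"
    using daughter_faces_eq_if_meet[OF assms(2) F(1)] W(1,2) x(1) w(1) by blast+
  with W(3) show False
    by simp
qed

theorem lemma4p2:
  fixes PP D W W' S :: "(real^'n) set"
  assumes "finite PP"
    and "\<forall>x\<in>PP. \<forall>i. x $ i \<in> \<int>"
    and "is_daughter PP D"
    and "W \<in> daughter_faces PP D"
    and "S face_of convex hull PP"
    and "S \<subseteq> W"
    and "W' \<in> daughter_faces PP D - {W}"
  shows "quot_proj S ` W' \<inter> PP_face PP S = {}"
proof (cases "S = {}")
  case True
  then show ?thesis
    by (simp add: PP_face_def)
next
  case False
  have W': "W' \<in> daughter_faces PP D" "W \<noteq> W'" "W' face_of convex hull PP"
    using assms(7) unfolding daughter_faces_def by auto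
  then have SW': "S \<inter> W' = {}"
    using daughter_faces_eq_if_meet[OF assms(3,4)] assms(6) by blast
  show ?thesis
  proof (rule ccontr)
    assume "\<not> ?thesis"
    then obtain w where w: "w \<in> W'" "quot_proj S w \<in> PP_face PP S"
      by blast
    then have "w \<in> convex hull (PP - S)"
      using face_subset_convex_hull_diff[OF assms(1) W'(3)] SW' by blast
    then obtain r r0 where "\<forall>s\<in>S. r \<bullet> s = r0" "\<forall>q\<in>PP - S. r0 + 1 \<le> r \<bullet> q" "r \<bullet> w = r0 + 1"
      using PP_face_separating_functional[OF assms(1) _ w(2)] by blast
    then obtain d T s where dT: "\<forall>x\<in>convex hull PP. d \<bullet> x \<le> T" "\<forall>q\<in>PP - S - W'. d \<bullet> q < T"
      "s \<in> S" "d \<bullet> s = T" "d \<bullet> w = T"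
      by (rule supporting_hyperplane_through_disjoint_faces[OF assms(1,5) False W'(3) SW' w(1)])
    have "\<forall>q\<in>PP - W - W'. d \<bullet> q < T"
      using dT(2) assms(6) by blast
    then show False
      using daughter_faces_no_common_supporting_hyperplane[OF assms(1,3,4) W'(1,2) dT(1)]
        assms(6) dT(3-5) w(1) by blast
  qed
qed

end
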